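(* Under the Standing Setup and Assumption (G) described in the context, let $V_{n-k}\subseteq\mathbf{F}_2^n$ be the subspace spanned by the last $n-k$ standard basis vectors. Then $$\mathcal{E}(PC_{f,\mathcal{T}})=\frac{1}{2^{k2^{s-1}}}\sum_{\alpha\in\mathbf{F}_2^{k2^{s-1}}}\ \prod_{c=0}^{2^s-1}\mathcal{E}\big(f_{\chi(c,\alpha)+V_{n-k}}\big).$$
   Context: Standing Setup. $f:\mathbf{F}_2^n\to\mathbf{F}_2$ is a Boolean function. $\mathbf{x}_1,\ldots,\mathbf{x}_n$ are binary sequences, $\mathbf{x}_j=(x_j(t))_{t\ge0}$, with $\mathbf{x}_j$ periodic of period $T_j$, i.e. $x_j(t)=x_j(t \bmod T_j)$. Let $s\ge1$ and integers $0=\ell_1<\ell_2<\cdots<\ell_{s+1}=k\le n$; variable $j$ belongs to block $i$ if $\ell_i<j\le\ell_{i+1}$. For $1\le i\le s$, $M_i=q_i\,\mathrm{lcm}(T_{\ell_i+1},\ldots,T_{\ell_{i+1}})$ with $q_i$ a positive integer. For $c=\sum_{i=1}^s c_i2^{i-1}\in\{0,\ldots,2^s-1\}$ with $c_i\in\{0,1\}$, put $\tau_c=\sum_{i=1}^s c_iM_i$, and $\mathcal{T}=\{\tau_c\}$. The parity-check sequence is $PC_{f,\mathcal{T}}(t)=\bigoplus_{c=0}^{2^s-1} f\big(x_1(t+\tau_c),\ldots,x_n(t+\tau_c)\big)$. The bias of a Boolean function $h$ of $m$ variables is $\mathcal{E}(h)=2^{-m}\sum_{x\in\mathbf{F}_2^m}(-1)^{h(x)}$.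 The bias $\mathcal{E}(PC_{f,\mathcal{T}})$ is the bias of $PC_{f,\mathcal{T}}(t)$ (for a fixed $t\ge0$) viewed as a Boolean function of the $T_1+\cdots+T_n$ bits $x_j(0),\ldots,x_j(T_j-1)$, $1\le j\le n$; equivalently $\mathbb{E}[(-1)^{PC_{f,\mathcal{T}}(t)}]$ when these bits are independent and uniform. Assumption (G): (i) for every $j$ with $k<j\le n$, the $2^s$ integers $\tau_c$ are pairwise incongruent modulo $T_j$; (ii) for every $i\in\{1,\ldots,s\}$ and every $j$ in block $i$, the $2^{s-1}$ integers $\sum_{l\ne i}c_lM_l$ ($c_l\in\{0,1\}$) are pairwise incongruent modulo $T_j$. The map $\chi$: write $\alpha\in\mathbf{F}_2^{k2^{s-1}}$ as $\alpha=(\alpha_1,\ldots,\alpha_k)$ with $\alpha_j=(\alpha_{j,0},\ldots,\alpha_{j,2^{s-1}-1})\in\mathbf{F}_2^{2^{s-1}}$. For $0\le c<2^s$ define $\chi(c,\alpha)=(\chi_1(c,\alpha),\ldots,\chi_k(c,\alpha),0,\ldots,0)\in\mathbf{F}_2^n$ (last $n-k$ coordinates zero), where for $j$ in block $i$, $\chi_j(c,\alpha)=\alpha_{j,m}$ with $m$ the integer obtained from the binary expansion of $c$ by deleting the bit $c_i$ (the bit of weight $2^{i-1}$); explicitly, if $c=2^iq+c_i2^{i-1}+r$ with $0\le r<2^{i-1}$, then $m=2^{i-1}q+r$. (Thus $\chi_j(c,\alpha)=\chi_j(c-2^{i-1},\alpha)$ whenever $c_i=1$.) For $a\in V_k$ (the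 span of the first $k$ standard basis vectors), the restriction $f_{a+V_{n-k}}$ is the Boolean function $y\in V_{n-k}\mapsto f(a+y)$ of $n-k$ variables, so $\mathcal{E}(f_{a+V_{n-k}})=2^{-(n-k)}\sum_{y\in V_{n-k}}(-1)^{f(a+y)}$. *)

theory Defs
  imports Complex_Main
begin

text \<open>Vectors of F_2^n are functions nat => bool, coordinates indexed 1..n,
  all other coordinates False.  Booleans: True = 1, False = 0.\<close>

definition F2vec :: "nat \<Rightarrow> (nat \<Rightarrow> bool) set" where
  "F2vec n = {x. \<forall>j. j \<notin> {1..n} \<longrightarrow> \<not> x j}"

definition Vlast :: "nat \<Rightarrow> nat \<Rightarrow> (nat \<Rightarrow> bool) set" where
  "Vlast n k = {y \<in> F2vec n. \<forall>j \<in> {1..k}. \<not> y j}"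

definition restr_bias :: "nat \<Rightarrow> nat \<Rightarrow> ((nat \<Rightarrow> bool) \<Rightarrow> bool) \<Rightarrow> (nat \<Rightarrow> bool) \<Rightarrow> real" where
  "restr_bias n k f a =
     (\<Sum>y\<in>Vlast n k. (if f (\<lambda>j. a j \<noteq> y j) then -1 else 1)) / 2 ^ (n - k)"

text \<open>Seeds: the bits x_j(0..T_j-1), 1 <= j <= n, as a function b j t.\<close>
definition seeds :: "nat \<Rightarrow> (nat \<Rightarrow> nat) \<Rightarrow> (nat \<Rightarrow> nat \<Rightarrow> bool) set" where
  "seeds n T = {b. \<forall>j t. (j \<notin> {1..n} \<or> t \<ge> T j) \<longrightarrow> \<not> b j t}"

definition bias_on :: "'a set \<Rightarrow> ('a \<Rightarrow> bool) \<Rightarrow> real" where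
  "bias_on A h = (\<Sum>x\<in>A. (if h x then -1 else 1)) / real (card A)"

text \<open>The i-th bit c_i of c (weight 2^(i-1)).\<close>
definition cbit :: "nat \<Rightarrow> nat \<Rightarrow> bool" where
  "cbit c i = odd (c div 2 ^ (i - 1))"

definition Mblk :: "(nat \<Rightarrow> nat) \<Rightarrow> (nat \<Rightarrow> nat) \<Rightarrow> (nat \<Rightarrow> nat) \<Rightarrow> nat \<Rightarrow> nat" where
  "Mblk T l q i = q i * Lcm (T ` {l i <.. l (Suc i)})"

definition tau :: "(nat \<Rightarrow> nat) \<Rightarrow> (nat \<Rightarrow> nat) \<Rightarrow> (nat \<Rightarrow> nat) \<Rightarrow> nat \<Rightarrow> nat \<Rightarrow> nat" where
  "tau T l q s c = (\<Sum>i=1..s. if cbit c i then Mblk T l q i else 0)"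

text \<open>Parity-check sequence PC_{f,T}(t) evaluated at seed b, with x_j(t) = b j (t mod T_j).\<close>
definition PC :: "nat \<Rightarrow> (nat \<Rightarrow> nat) \<Rightarrow> (nat \<Rightarrow> nat) \<Rightarrow> (nat \<Rightarrow> nat) \<Rightarrow> nat
    \<Rightarrow> ((nat \<Rightarrow> bool) \<Rightarrow> bool) \<Rightarrow> nat \<Rightarrow> (nat \<Rightarrow> nat \<Rightarrow> bool) \<Rightarrow> bool" where
  "PC n T l q s f t b =
     odd (card {c \<in> {..<2 ^ s}. f (\<lambda>j. b j ((t + tau T l q s c) mod T j))})"

definition blk :: "(nat \<Rightarrow> nat) \<Rightarrow> nat \<Rightarrow> nat \<Rightarrow> nat" where
  "blk l s j = (THE i. i \<in> {1..s} \<and> l i < j \<and> j \<le> l (Suc i))"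

text \<open>Delete bit c_i from c: c = 2^i q + c_i 2^(i-1) + r  gives  2^(i-1) q + r.\<close>
definition delbit :: "nat \<Rightarrow> nat \<Rightarrow> nat" where
  "delbit i c = 2 ^ (i - 1) * (c div 2 ^ i) + c mod 2 ^ (i - 1)"

definition chi :: "(nat \<Rightarrow> nat) \<Rightarrow> nat \<Rightarrow> nat \<Rightarrow> nat \<Rightarrow> (nat \<Rightarrow> nat \<Rightarrow> bool) \<Rightarrow> nat \<Rightarrow> bool" where
  "chi l s k c \<alpha> = (\<lambda>j. if j \<in> {1..k} then \<alpha> j (delbit (blk l s j) c) else False)"

definition alphas :: "nat \<Rightarrow> nat \<Rightarrow> (nat \<Rightarrow> nat \<Rightarrow> bool) set" where
  "alphas k s = {\<alpha>. \<forall>j m. (j \<notin> {1..k} \<or> m \<ge> 2 ^ (s - 1)) \<longrightarrow> \<not> \<alpha> j m}"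

end

theory Submission
  imports Defs
begin

(* A seed is a Boolean function b on the finite set of positions
   (j, u), 1 <= j <= n, u < T_j, and the c-th term of the parity check reads
   variable j at position (j, pos c j).  For j > k these positions are
   private: by (G1) different terms c read different positions.  For a
   variable j of block i <= k, the position read by term c only depends on c
   with its bit c_i deleted (M_i is a multiple of T_j), and by (G2) the
   k 2^(s-1) shared positions are indexed bijectively by the pairs (j, m).
   Averaging a product of functions over all seeds therefore factorises: fix
   the bits on the shared positions, ignore the bits that are never read, and
   average each term independently over its own private positions; each such
   average is the bias of a restriction f_{chi(c,alpha) + V_{n-k}}. *)

section \<open>Deleting and inserting a bit\<close>

lemma bit_split:
  fixes a r :: nat
  assumes "r < 2 ^ q"
  shows "bit (2 ^ q * a + r) n = (if n < q then bit r n else bit a (n - q))"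
proof (cases "n < q")
  case True
  have e: "2 ^ q * a = 2 ^ n * (2 ^ (q - n) * a)" using True
    by (metis le_add_diff_inverse less_imp_le_nat mult.assoc power_add)
  have "(2 ^ q * a + r) div 2 ^ n = 2 ^ (q - n) * a + r div 2 ^ n"
    unfolding e by simp
  moreover have "even (2 ^ (q - n) * a)" using True by simp
  ultimately show ?thesis using True by (simp add: bit_nat_def)
next
  case False
  have "(2 ^ q * a + r) div 2 ^ q = a" using assms by simp
  hence "(2 ^ q * a + r) div 2 ^ n = a div 2 ^ (n - q)"
    using False by (metis div_mult2_eq le_add_diff_inverse not_less power_add)
  then show ?thesis using False by (simp add: bit_nat_def)
qed

text \<open>Inserting a zero bit of weight 2^(i-1); the inverse of delbit on the
  numbers whose bit c_i vanishes.\<close>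
definition ins :: "nat \<Rightarrow> nat \<Rightarrow> nat" where
  "ins i m = 2 ^ i * (m div 2 ^ (i - 1)) + m mod 2 ^ (i - 1)"

lemma cbit_bit: "cbit c i = bit c (i - 1)"
  by (simp add: cbit_def bit_nat_def)

lemma bit_delbit:
  assumes "i \<ge> 1"
  shows "bit (delbit i c) n = (if n < i - 1 then bit c n else bit c (n + 1))"
proof -
  have "bit (delbit i c) n =
      (if n < i - 1 then bit (c mod 2 ^ (i - 1)) n else bit (c div 2 ^ i) (n - (i - 1)))"
    unfolding delbit_def by (rule bit_split) simp
  also have "\<dots> = (if n < i - 1 then bit c n else bit c (n + 1))"
    using assms by (auto simp add: bit_simps simp flip: take_bit_eq_mod drop_bit_eq_div)
  finally show ?thesis .
qed

lemma bit_ins: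
  assumes "i \<ge> 1"
  shows "bit (ins i m) n =
    (if n < i - 1 then bit m n else if n = i - 1 then False else bit m (n - 1))"
proof -
  have small: "m mod 2 ^ (i - 1) < 2 ^ i"
    by (rule less_le_trans[OF mod_less_divisor power_increasing]) auto
  have "bit (ins i m) n =
      (if n < i then bit (m mod 2 ^ (i - 1)) n else bit (m div 2 ^ (i - 1)) (n - i))"
    unfolding ins_def by (rule bit_split[OF small])
  also have "\<dots> = (if n < i - 1 then bit m n else if n = i - 1 then False else bit m (n - 1))"
    using assms by (auto simp add: bit_simps simp flip: take_bit_eq_mod drop_bit_eq_div)
  finally show ?thesis .
qed

lemma delbit_ins: "i \<ge> 1 \<Longrightarrow> delbit i (ins i m) = m"
  by (rule bit_eqI) (auto simp add: bit_ins bit_delbit)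

lemma not_cbit_ins: "i \<ge> 1 \<Longrightarrow> \<not> cbit (ins i m) i"
  by (simp add: cbit_bit bit_ins)

lemma cbit_ins_delbit:
  assumes "i \<ge> 1" "i' \<noteq> i" "i' \<ge> 1"
  shows "cbit (ins i (delbit i c)) i' = cbit c i'"
proof -
  have "bit (ins i (delbit i c)) n = (n \<noteq> i - 1 \<and> bit c n)" for n
    using assms(1) by (auto simp add: bit_ins bit_delbit)
  moreover have "i' - 1 \<noteq> i - 1" using assms by simp
  ultimately show ?thesis by (simp add: cbit_bit)
qed

lemma delbit_less:
  assumes "1 \<le> i" "i \<le> s" "c < 2 ^ s"
  shows "delbit i c < 2 ^ (s - 1)"
proof -
  have "c div 2 ^ i < 2 ^ (s - i)"
    using assms by (metis div_less_iff_less_mult le_add_diff_inverse power_add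
        zero_less_numeral zero_less_power mult.commute)
  then have "2 ^ (i - 1) * (c div 2 ^ i + 1) \<le> 2 ^ (i - 1) * 2 ^ (s - i)"
    by (intro mult_le_mono2) simp
  also have "\<dots> = 2 ^ (s - 1)" using assms by (simp flip: power_add)
  finally have "2 ^ (i - 1) * (c div 2 ^ i) + 2 ^ (i - 1) \<le> 2 ^ (s - 1)" by simp
  moreover have "c mod 2 ^ (i - 1) < 2 ^ (i - 1)" by simp
  ultimately show ?thesis unfolding delbit_def by linarith
qed

lemma ins_less:
  assumes "1 \<le> i" "i \<le> s" "m < 2 ^ (s - 1)"
  shows "ins i m < 2 ^ s"
proof -
  have "m < 2 ^ (i - 1) * 2 ^ (s - i)" using assms by (simp flip: power_add)
  then have "m div 2 ^ (i - 1) < 2 ^ (s - i)"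
    by (simp add: div_less_iff_less_mult mult.commute)
  then have "2 ^ i * (m div 2 ^ (i - 1) + 1) \<le> 2 ^ i * 2 ^ (s - i)"
    by (intro mult_le_mono2) simp
  also have "\<dots> = 2 ^ s" using assms by (simp flip: power_add)
  finally have "2 ^ i * (m div 2 ^ (i - 1)) + 2 ^ i \<le> 2 ^ s" by simp
  moreover have "m mod 2 ^ (i - 1) < 2 ^ i"
    by (rule less_le_trans[OF mod_less_divisor power_increasing]) auto
  ultimately show ?thesis unfolding ins_def by linarith
qed

lemma tau_ins_delbit:
  assumes "1 \<le> i" "i \<le> s"
  shows "tau T l q s c =
    tau T l q s (ins i (delbit i c)) + (if cbit c i then Mblk T l q i else 0)"
proof -
  let ?rest = "\<Sum>i'\<in>{1..s} - {i}. if cbit c i' then Mblk T l q i' else 0"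
  have i: "i \<in> {1..s}" using assms by simp
  have "tau T l q s c = (if cbit c i then Mblk T l q i else 0) + ?rest"
    unfolding tau_def by (rule sum.remove[OF _ i]) simp
  moreover have "tau T l q s (ins i (delbit i c)) = 0 + ?rest"
    unfolding tau_def using assms
    by (subst sum.remove[OF _ i]) (auto simp: not_cbit_ins cbit_ins_delbit intro!: sum.cong)
  ultimately show ?thesis by simp
qed

section \<open>Averages over Boolean functions with prescribed support\<close>

definition supp_set :: "'a set \<Rightarrow> ('a \<Rightarrow> bool) set" where
  "supp_set P = {b. \<forall>p. p \<notin> P \<longrightarrow> \<not> b p}"

definition restrict_to :: "'a set \<Rightarrow> ('a \<Rightarrow> bool) \<Rightarrow> ('a \<Rightarrow> bool)" where
  "restrict_to Q b = (\<lambda>p. p \<in> Q \<and> b p)"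

lemma restrict_to_in_supp_set: "restrict_to Q b \<in> supp_set Q"
  by (simp add: restrict_to_def supp_set_def)

lemma restrict_to_restrict_to: "A \<subseteq> B \<Longrightarrow> restrict_to A (restrict_to B b) = restrict_to A b"
  by (auto simp: restrict_to_def)

lemma supp_set_mono: "A \<subseteq> B \<Longrightarrow> supp_set A \<subseteq> supp_set B"
  by (auto simp: supp_set_def)

lemma or_in_supp_set:
  "a \<in> supp_set A \<Longrightarrow> w \<in> supp_set B \<Longrightarrow> (\<lambda>p. a p \<or> w p) \<in> supp_set (A \<union> B)"
  by (auto simp: supp_set_def)

lemma restrict_to_or:
  assumes "a \<in> supp_set Q" "w \<in> supp_set R" "Q \<inter> R = {}"
  shows "restrict_to Q (\<lambda>p. a p \<or> w p) = a" "restrict_to R (\<lambda>p. a p \<or> w p) = w"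
  using assms unfolding restrict_to_def supp_set_def by (auto simp: fun_eq_iff)

lemma supp_set_Pow: "bij_betw (\<lambda>b. {p. b p}) (supp_set P) (Pow P)"
  by (rule bij_betw_byWitness[where f'="\<lambda>A p. p \<in> A"]) (auto simp: supp_set_def)

lemma card_supp_set: "finite P \<Longrightarrow> card (supp_set P) = 2 ^ card P"
  by (metis bij_betw_same_card[OF supp_set_Pow] card_Pow)

lemma split_bij:
  assumes "P \<inter> R = {}"
  shows "bij_betw (\<lambda>(a, w) p. a p \<or> w p) (supp_set P \<times> supp_set R) (supp_set (P \<union> R))"
proof (rule bij_betw_byWitness[where f'="\<lambda>b. (restrict_to P b, restrict_to R b)"])
  show "\<forall>x\<in>supp_set P \<times> supp_set R. (\<lambda>b. (restrict_to P b, restrict_to R b)) ((\<lambda>(a, w) p. a p \<or> w p) x) = x"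
    using restrict_to_or[OF _ _ assms] by auto
  show "\<forall>b\<in>supp_set (P \<union> R). (\<lambda>(a, w) p. a p \<or> w p) (restrict_to P b, restrict_to R b) = b"
    by (auto simp: supp_set_def restrict_to_def fun_eq_iff)
qed (auto simp: supp_set_def restrict_to_def)

lemma split_sum:
  fixes G :: "('a \<Rightarrow> bool) \<Rightarrow> 'b::comm_monoid_add"
  assumes "P \<inter> R = {}"
  shows "sum G (supp_set (P \<union> R)) = (\<Sum>a\<in>supp_set P. \<Sum>w\<in>supp_set R. G (\<lambda>p. a p \<or> w p))"
proof -
  have "sum G (supp_set (P \<union> R)) =
      (\<Sum>x\<in>supp_set P \<times> supp_set R. G ((\<lambda>(a, w) p. a p \<or> w p) x))"
    by (rule sum.reindex_bij_betw[OF split_bij[OF assms], symmetric])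
  also have "\<dots> = (\<Sum>a\<in>supp_set P. \<Sum>w\<in>supp_set R. G (\<lambda>p. a p \<or> w p))"
    by (simp add: sum.cartesian_product split_def)
  finally show ?thesis .
qed

lemma marg_sum:
  fixes G :: "('a \<Rightarrow> bool) \<Rightarrow> 'b::comm_semiring_1"
  assumes fin: "finite P" and sub: "Q \<subseteq> P"
    and dep: "\<And>b. b \<in> supp_set P \<Longrightarrow> G b = G (restrict_to Q b)"
  shows "sum G (supp_set P) = 2 ^ card (P - Q) * sum G (supp_set Q)"
proof -
  have PU: "P = Q \<union> (P - Q)" using sub by blast
  have "sum G (supp_set P) = (\<Sum>a\<in>supp_set Q. \<Sum>w\<in>supp_set (P - Q). G (\<lambda>p. a p \<or> w p))"
    by (subst PU, rule split_sum) blast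
  also have "\<dots> = (\<Sum>a\<in>supp_set Q. \<Sum>w\<in>supp_set (P - Q). G a)"
  proof (intro sum.cong refl)
    fix a w assume a: "a \<in> supp_set Q" and w: "w \<in> supp_set (P - Q)"
    have "(\<lambda>p. a p \<or> w p) \<in> supp_set P" using or_in_supp_set[OF a w] PU by simp
    then show "G (\<lambda>p. a p \<or> w p) = G a" using dep restrict_to_or(1)[OF a w] by auto
  qed
  also have "\<dots> = 2 ^ card (P - Q) * sum G (supp_set Q)"
    using fin by (simp add: card_supp_set sum_distrib_right mult.commute)
  finally show ?thesis .
qed

lemma prod_sum:
  fixes H :: "'c \<Rightarrow> ('a \<Rightarrow> bool) \<Rightarrow> 'b::comm_semiring_1"
  assumes "finite C"
    and disj: "\<And>c c'. c \<in> C \<Longrightarrow> c' \<in> C \<Longrightarrow> c \<noteq> c' \<Longrightarrow> R c \<inter> R c' = {}"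
    and dep: "\<And>c b. c \<in> C \<Longrightarrow> b \<in> supp_set (\<Union>c\<in>C. R c) \<Longrightarrow> H c b = H c (restrict_to (R c) b)"
  shows "(\<Sum>b\<in>supp_set (\<Union>c\<in>C. R c). \<Prod>c\<in>C. H c b) = (\<Prod>c\<in>C. \<Sum>b\<in>supp_set (R c). H c b)"
  using assms
proof (induction C rule: finite_induct)
  case empty
  show ?case by (simp add: card_supp_set)
next
  case (insert c C)
  let ?U = "\<Union>c\<in>C. R c"
  have disj: "R c \<inter> ?U = {}" using insert.prems(1) insert.hyps(2) by fastforce
  have ih: "(\<Sum>w\<in>supp_set ?U. \<Prod>c'\<in>C. H c' w) = (\<Prod>c\<in>C. \<Sum>b\<in>supp_set (R c). H c b)"
    using insert.prems supp_set_mono[of ?U "\<Union>c\<in>insert c C. R c"]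
    by (intro insert.IH) blast+
  have "(\<Sum>b\<in>supp_set (\<Union>c\<in>insert c C. R c). \<Prod>c\<in>insert c C. H c b)
      = (\<Sum>a\<in>supp_set (R c). \<Sum>w\<in>supp_set ?U. \<Prod>c'\<in>insert c C. H c' (\<lambda>p. a p \<or> w p))"
    by (simp only: UN_insert split_sum[OF disj])
  also have "\<dots> = (\<Sum>a\<in>supp_set (R c). \<Sum>w\<in>supp_set ?U. H c a * (\<Prod>c'\<in>C. H c' w))"
  proof (intro sum.cong refl)
    fix a w assume a: "a \<in> supp_set (R c)" and w: "w \<in> supp_set ?U"
    have aw: "(\<lambda>p. a p \<or> w p) \<in> supp_set (\<Union>c\<in>insert c C. R c)"
      using or_in_supp_set[OF a w] by simp
    have a_all: "a \<in> supp_set (\<Union>c\<in>insert c C. R c)" and w_all: "w \<in> supp_set (\<Union>c\<in>insert c C. R c)"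
      using a w supp_set_mono[of _ "\<Union>c\<in>insert c C. R c"] by auto
    have "H c (\<lambda>p. a p \<or> w p) = H c a"
      using insert.prems(2)[OF _ aw] restrict_to_or(1)[OF a w disj] by simp
    moreover have "H c' (\<lambda>p. a p \<or> w p) = H c' w" if c': "c' \<in> C" for c'
    proof -
      have "restrict_to (R c') (\<lambda>p. a p \<or> w p) = restrict_to (R c') w"
        using a c' disj unfolding restrict_to_def supp_set_def by (auto simp: fun_eq_iff)
      then show ?thesis using insert.prems(2)[OF _ aw] insert.prems(2)[OF _ w_all] c' by simp
    qed
    ultimately show "(\<Prod>c'\<in>insert c C. H c' (\<lambda>p. a p \<or> w p)) = H c a * (\<Prod>c'\<in>C. H c' w)"
      using insert.hyps by simp
  qed
  also have "\<dots> = (\<Sum>a\<in>supp_set (R c). H c a) * (\<Sum>w\<in>supp_set ?U. \<Prod>c'\<in>C. H c' w)"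
    by (simp add: sum_product)
  finally show ?case using insert.hyps ih by simp
qed

lemma sum_prod_factor:
  fixes G :: "'c \<Rightarrow> ('a \<Rightarrow> bool) \<Rightarrow> 'b::comm_semiring_1"
  assumes finP: "finite P" and finC: "finite C"
    and SP: "S \<subseteq> P" and RP: "\<And>c. c \<in> C \<Longrightarrow> R c \<subseteq> P"
    and SR: "\<And>c. c \<in> C \<Longrightarrow> S \<inter> R c = {}"
    and Rdisj: "\<And>c c'. c \<in> C \<Longrightarrow> c' \<in> C \<Longrightarrow> c \<noteq> c' \<Longrightarrow> R c \<inter> R c' = {}"
    and dep: "\<And>c b. c \<in> C \<Longrightarrow> b \<in> supp_set P \<Longrightarrow> G c b = G c (restrict_to (S \<union> R c) b)"
  shows "(\<Sum>b\<in>supp_set P. \<Prod>c\<in>C. G c b) =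
    2 ^ card (P - (S \<union> (\<Union>c\<in>C. R c))) *
    (\<Sum>a\<in>supp_set S. \<Prod>c\<in>C. \<Sum>w\<in>supp_set (R c). G c (\<lambda>p. a p \<or> w p))"
proof -
  define U where "U = (\<Union>c\<in>C. R c)"
  have SU: "S \<inter> U = {}" using SR by (auto simp: U_def)
  have SUP: "S \<union> U \<subseteq> P" using SP RP by (auto simp: U_def)
  have "(\<Sum>b\<in>supp_set P. \<Prod>c\<in>C. G c b) = 2 ^ card (P - (S \<union> U)) * (\<Sum>b\<in>supp_set (S \<union> U). \<Prod>c\<in>C. G c b)"
  proof (rule marg_sum[OF finP SUP], rule prod.cong[OF refl])
    fix b c assume b: "b \<in> supp_set P" and c: "c \<in> C"
    have "restrict_to (S \<union> U) b \<in> supp_set P" using restrict_to_in_supp_set supp_set_mono[OF SUP] by blast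
    moreover have "restrict_to (S \<union> R c) (restrict_to (S \<union> U) b) = restrict_to (S \<union> R c) b"
      using c by (intro restrict_to_restrict_to) (auto simp: U_def)
    ultimately have "G c (restrict_to (S \<union> U) b) = G c (restrict_to (S \<union> R c) b)"
      using dep[OF c] by metis
    then show "G c b = G c (restrict_to (S \<union> U) b)" using dep[OF c b] by simp
  qed
  also have "(\<Sum>b\<in>supp_set (S \<union> U). \<Prod>c\<in>C. G c b) =
      (\<Sum>a\<in>supp_set S. \<Sum>w\<in>supp_set U. \<Prod>c\<in>C. G c (\<lambda>p. a p \<or> w p))"
    by (rule split_sum[OF SU])
  also have "\<dots> = (\<Sum>a\<in>supp_set S. \<Prod>c\<in>C. \<Sum>w\<in>supp_set (R c). G c (\<lambda>p. a p \<or> w p))"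
  proof (rule sum.cong[OF refl])
    fix a assume a: "a \<in> supp_set S"
    have in_P: "(\<lambda>p. a p \<or> w p) \<in> supp_set P" if "w \<in> supp_set U" for w
      using or_in_supp_set[OF a that] supp_set_mono[OF SUP] by blast
    show "(\<Sum>w\<in>supp_set U. \<Prod>c\<in>C. G c (\<lambda>p. a p \<or> w p)) =
        (\<Prod>c\<in>C. \<Sum>w\<in>supp_set (R c). G c (\<lambda>p. a p \<or> w p))"
      unfolding U_def
    proof (rule prod_sum[OF finC Rdisj])
      fix c w assume c: "c \<in> C" and w: "w \<in> supp_set (\<Union>c\<in>C. R c)"
      have w': "restrict_to (R c) w \<in> supp_set U"
        using restrict_to_in_supp_set supp_set_mono[of "R c" U] c by (auto simp: U_def)
      have "restrict_to (S \<union> R c) (\<lambda>p. a p \<or> w p) = restrict_to (S \<union> R c) (\<lambda>p. a p \<or> restrict_to (R c) w p)"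
        using a w SU unfolding restrict_to_def supp_set_def U_def by (auto simp: fun_eq_iff)
      then show "G c (\<lambda>p. a p \<or> w p) = G c (\<lambda>p. a p \<or> restrict_to (R c) w p)"
        using dep[OF c in_P] w w' by (simp add: U_def)
    qed
  qed
  finally show ?thesis unfolding U_def .
qed

lemma mean_prod_factor:
  fixes G :: "'c \<Rightarrow> ('a \<Rightarrow> bool) \<Rightarrow> 'b::field_char_0"
  assumes finP: "finite P" and finC: "finite C"
    and SP: "S \<subseteq> P" and RP: "\<And>c. c \<in> C \<Longrightarrow> R c \<subseteq> P"
    and SR: "\<And>c. c \<in> C \<Longrightarrow> S \<inter> R c = {}"
    and Rdisj: "\<And>c c'. c \<in> C \<Longrightarrow> c' \<in> C \<Longrightarrow> c \<noteq> c' \<Longrightarrow> R c \<inter> R c' = {}"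
    and dep: "\<And>c b. c \<in> C \<Longrightarrow> b \<in> supp_set P \<Longrightarrow> G c b = G c (restrict_to (S \<union> R c) b)"
  shows "(\<Sum>b\<in>supp_set P. \<Prod>c\<in>C. G c b) / 2 ^ card P =
    (\<Sum>a\<in>supp_set S. \<Prod>c\<in>C. (\<Sum>w\<in>supp_set (R c). G c (\<lambda>p. a p \<or> w p)) / 2 ^ card (R c))
      / 2 ^ card S"
proof -
  define X where "X = S \<union> (\<Union>c\<in>C. R c)"
  have XP: "X \<subseteq> P" using SP RP by (auto simp: X_def)
  have finR: "\<forall>c\<in>C. finite (R c)" using RP finP finite_subset by blast
  have "card X = card S + (\<Sum>c\<in>C. card (R c))"
    unfolding X_def using finP SP SR finC finR Rdisj
    by (subst card_Un_disjoint) (auto intro: finite_subset simp: card_UN_disjoint)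
  moreover have "card P = card (P - X) + card X"
    using XP finP by (metis card_Diff_subset card_mono finite_subset le_add_diff_inverse2)
  ultimately have "(2::'b) ^ card P = 2 ^ card (P - X) * 2 ^ card S * (\<Prod>c\<in>C. 2 ^ card (R c))"
    by (simp add: power_add power_sum)
  then show ?thesis
    using sum_prod_factor[where G=G and R=R, OF assms, folded X_def]
    by (simp add: prod_dividef sum_divide_distrib[symmetric])
qed

lemma transfer_bij:
  assumes "bij_betw \<phi> A B"
  shows "bij_betw (\<lambda>b x. x \<in> A \<and> b (\<phi> x)) (supp_set B) (supp_set A)"
proof (rule bij_betw_byWitness[where f'="\<lambda>a y. y \<in> B \<and> a (the_inv_into A \<phi> y)"])
  have inv: "\<And>x. x \<in> A \<Longrightarrow> the_inv_into A \<phi> (\<phi> x) = x"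
    and img: "\<And>x. x \<in> A \<Longrightarrow> \<phi> x \<in> B"
    and inv': "\<And>y. y \<in> B \<Longrightarrow> the_inv_into A \<phi> y \<in> A \<and> \<phi> (the_inv_into A \<phi> y) = y"
    using assms by (auto simp: bij_betw_def the_inv_into_f_f f_the_inv_into_f the_inv_into_into)
  show "\<forall>b\<in>supp_set B. (\<lambda>y. y \<in> B \<and> (the_inv_into A \<phi> y \<in> A \<and> b (\<phi> (the_inv_into A \<phi> y)))) = b"
  proof (intro ballI ext)
    fix b y assume "b \<in> supp_set B"
    then show "(y \<in> B \<and> the_inv_into A \<phi> y \<in> A \<and> b (\<phi> (the_inv_into A \<phi> y))) = b y"
      using inv'[of y] by (cases "y \<in> B") (auto simp: supp_set_def)
  qed
  show "\<forall>a\<in>supp_set A. (\<lambda>x. x \<in> A \<and> (\<phi> x \<in> B \<and> a (the_inv_into A \<phi> (\<phi> x)))) = a"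
  proof (intro ballI ext)
    fix a x assume "a \<in> supp_set A"
    then show "(x \<in> A \<and> \<phi> x \<in> B \<and> a (the_inv_into A \<phi> (\<phi> x))) = a x"
      using inv[of x] img[of x] by (cases "x \<in> A") (auto simp: supp_set_def)
  qed
qed (auto simp: supp_set_def)

lemma curry_bij:
  "bij_betw curry (supp_set (Sigma A B)) {b. \<forall>j u. (j \<notin> A \<or> u \<notin> B j) \<longrightarrow> \<not> b j u}"
  by (rule bij_betw_byWitness[where f'=case_prod]) (auto simp: supp_set_def)

lemma parity_prod:
  assumes "finite C"
  shows "(if odd (card {c\<in>C. P c}) then -1 else 1::real) = (\<Prod>c\<in>C. if P c then -1 else 1)"
  using assms
proof (induction C rule: finite_induct)
  case empty then show ?case by simp
next
  case (insert c C)
  have "{x\<in>insert c C. P x} = (if P c then insert c {x\<in>C. P x} else {x\<in>C. P x})"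
    by auto
  then have "card {x\<in>insert c C. P x} = (if P c then Suc (card {x\<in>C. P x}) else card {x\<in>C. P x})"
    using insert.hyps by simp
  then show ?case using insert.hyps by (simp add: insert.IH[symmetric])
qed

lemma l_mono_le:
  assumes mono: "\<forall>i \<in> {1..s}. l i < l (Suc i)"
  shows "1 \<le> a \<Longrightarrow> a \<le> b \<Longrightarrow> b \<le> Suc s \<Longrightarrow> (l a :: nat) \<le> l b"
proof (induction b)
  case (Suc b)
  show ?case
  proof (cases "a = Suc b")
    case False
    with Suc.prems have "l a \<le> l b" "l b < l (Suc b)" using Suc.IH mono by auto
    then show ?thesis by simp
  qed simp
qed simp

lemma blk_prop:
  assumes mono: "\<forall>i \<in> {1..s}. l i < l (Suc i)" and l1: "l 1 = 0" and ls: "l (Suc s) = k"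
    and j: "j \<in> {1..k}"
  shows "blk l s j \<in> {1..s} \<and> l (blk l s j) < j \<and> j \<le> l (Suc (blk l s j))"
proof -
  have ex: "\<exists>i\<in>{1..m}. l i < j \<and> j \<le> l (Suc i)" if "m \<le> s" "j \<le> l (Suc m)" for m
    using that
  proof (induction m)
    case (Suc m)
    then show ?case by (cases "j \<le> l (Suc m)") (force, auto intro!: bexI[of _ "Suc m"])
  qed (use j l1 in simp)
  have uniq: "i = i'" if "i \<in> {1..s} \<and> l i < j \<and> j \<le> l (Suc i)"
      "i' \<in> {1..s} \<and> l i' < j \<and> j \<le> l (Suc i')" for i i'
  proof (rule ccontr)
    assume "i \<noteq> i'"
    then consider "Suc i \<le> i'" | "Suc i' \<le> i" by linarith
    then show False
      using that l_mono_le[OF mono, of "Suc i" i'] l_mono_le[OF mono, of "Suc i'" i] by cases auto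
  qed
  obtain i where i: "i \<in> {1..s} \<and> l i < j \<and> j \<le> l (Suc i)"
    using ex[of s] ls j by auto
  show ?thesis unfolding blk_def
    by (rule theI[of _ i]) (use i uniq in blast)+
qed

section \<open>The reading pattern of the parity check\<close>

text \<open>The hypotheses of the theorem that the computation actually uses.\<close>
locale parity_check =
  fixes n k s :: nat and T q l :: "nat \<Rightarrow> nat"
    and f :: "(nat \<Rightarrow> bool) \<Rightarrow> bool" and t :: nat
  assumes T_pos: "\<forall>j \<in> {1..n}. T j > 0"
    and l_first: "l 1 = 0"
    and l_mono: "\<forall>i \<in> {1..s}. l i < l (Suc i)"
    and l_last: "l (Suc s) = k"
    and k_le: "k \<le> n"
    and G1: "\<forall>j \<in> {k<..n}. inj_on (\<lambda>c. tau T l q s c mod T j) {..<2 ^ s}"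
    and G2: "\<forall>i \<in> {1..s}. \<forall>j \<in> {l i <.. l (Suc i)}.
               inj_on (\<lambda>c. tau T l q s c mod T j) {c. c < 2 ^ s \<and> \<not> cbit c i}"
begin

definition pos :: "nat \<Rightarrow> nat \<Rightarrow> nat" where
  "pos c j = (t + tau T l q s c) mod T j"

text \<open>All seed positions (j, u), so that seeds are the functions supported
  on them (after uncurrying).\<close>
definition positions :: "(nat \<times> nat) set" where
  "positions = Sigma {1..n} (\<lambda>j. {..<T j})"

definition priv :: "nat \<Rightarrow> (nat \<times> nat) set" where
  "priv c = (\<lambda>j. (j, pos c j)) ` {k<..n}"

text \<open>The positions read for block variables, indexed by (j, m) where m is
  a term index with the bit of the block of j deleted.\<close>
definition shared_index :: "(nat \<times> nat) set" where
  "shared_index = Sigma {1..k} (\<lambda>j. {..<2 ^ (s - 1)})"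

definition shared_pos :: "nat \<times> nat \<Rightarrow> nat \<times> nat" where
  "shared_pos = (\<lambda>(j, m). (j, pos (ins (blk l s j) m) j))"

definition shared :: "(nat \<times> nat) set" where
  "shared = shared_pos ` shared_index"

text \<open>The alpha of the theorem determined by the bits on the shared
  positions, and the vector of V_{n-k} read by term c on its private
  positions.\<close>
definition alpha_of :: "(nat \<times> nat \<Rightarrow> bool) \<Rightarrow> nat \<Rightarrow> nat \<Rightarrow> bool" where
  "alpha_of a = curry (\<lambda>x. x \<in> shared_index \<and> a (shared_pos x))"

definition tail_of :: "nat \<Rightarrow> (nat \<times> nat \<Rightarrow> bool) \<Rightarrow> nat \<Rightarrow> bool" where
  "tail_of c w = (\<lambda>j. j \<in> {k<..n} \<and> w (j, pos c j))"

definition term_sign :: "nat \<Rightarrow> (nat \<times> nat \<Rightarrow> bool) \<Rightarrow> real" where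
  "term_sign c b = (if f (\<lambda>j. b (j, pos c j)) then -1 else 1)"

lemma blk_in_block:
  "j \<in> {1..k} \<Longrightarrow> blk l s j \<in> {1..s} \<and> l (blk l s j) < j \<and> j \<le> l (Suc (blk l s j))"
  using blk_prop[OF l_mono l_first l_last] .

lemma pos_less: "j \<in> {1..n} \<Longrightarrow> pos c j < T j"
  unfolding pos_def using T_pos by simp

lemma pos_eq_imp_tau_cong: "pos c j = pos c' j \<Longrightarrow> tau T l q s c mod T j = tau T l q s c' mod T j"
  unfolding pos_def by (simp add: nat_mod_eq_iff)

text \<open>Variable j of block i is read at the same position whatever c_i is,
  since T_j divides M_i.\<close>
lemma pos_ins_delbit:
  assumes j: "j \<in> {1..k}"
  shows "pos (ins (blk l s j) (delbit (blk l s j) c)) j = pos c j"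
proof -
  let ?i = "blk l s j"
  have i: "1 \<le> ?i" "?i \<le> s" using blk_in_block[OF j] by auto
  have "T j dvd Mblk T l q ?i"
    unfolding Mblk_def using blk_in_block[OF j] by (intro dvd_mult dvd_Lcm) auto
  then obtain r where r: "(if cbit c ?i then Mblk T l q ?i else 0) = T j * r"
    by (cases "cbit c ?i") (auto elim!: dvdE)
  have "tau T l q s c = tau T l q s (ins ?i (delbit ?i c)) + T j * r"
    using tau_ins_delbit[OF i, where T=T and l=l and q=q and c=c] r by simp
  then show ?thesis unfolding pos_def by (simp add: add.assoc[symmetric])
qed

lemma shared_pos_delbit:
  assumes "j \<in> {1..k}" "c < 2 ^ s"
  shows "(j, delbit (blk l s j) c) \<in> shared_index"
    and "shared_pos (j, delbit (blk l s j) c) = (j, pos c j)"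
  using assms blk_in_block[OF assms(1)] delbit_less pos_ins_delbit
  by (auto simp: shared_index_def shared_pos_def)

lemma inj_shared_pos: "inj_on shared_pos shared_index"
proof (rule inj_onI, clarify)
  fix j m j' m'
  assume x: "(j, m) \<in> shared_index" and y: "(j', m') \<in> shared_index"
    and e: "shared_pos (j, m) = shared_pos (j', m')"
  let ?i = "blk l s j"
  have jj: "j' = j" using e by (simp add: shared_pos_def)
  have j: "j \<in> {1..k}" and m: "m < 2 ^ (s - 1)" and m': "m' < 2 ^ (s - 1)"
    using x y jj by (auto simp: shared_index_def)
  have i: "1 \<le> ?i" "?i \<le> s" and jblk: "j \<in> {l ?i <.. l (Suc ?i)}"
    using blk_in_block[OF j] by auto
  have "tau T l q s (ins ?i m) mod T j = tau T l q s (ins ?i m') mod T j"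
    using e jj by (intro pos_eq_imp_tau_cong) (simp add: shared_pos_def)
  moreover have "ins ?i m \<in> {c. c < 2 ^ s \<and> \<not> cbit c ?i}" "ins ?i m' \<in> {c. c < 2 ^ s \<and> \<not> cbit c ?i}"
    using ins_less[OF i m] ins_less[OF i m'] not_cbit_ins i by auto
  ultimately have "ins ?i m = ins ?i m'"
    using G2 i jblk by (meson atLeastAtMost_iff inj_onD)
  then show "j = j' \<and> m = m'" using delbit_ins[OF i(1)] jj by metis
qed

lemma priv_disjoint:
  assumes "c < 2 ^ s" "c' < 2 ^ s" "c \<noteq> c'"
  shows "priv c \<inter> priv c' = {}"
proof (rule ccontr)
  assume "priv c \<inter> priv c' \<noteq> {}"
  then obtain j where j: "j \<in> {k<..n}" "pos c j = pos c' j" unfolding priv_def by force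
  have "tau T l q s c mod T j = tau T l q s c' mod T j" using pos_eq_imp_tau_cong[OF j(2)] .
  then show False using G1 j(1) assms by (auto dest: inj_onD)
qed

lemma fst_shared: "p \<in> shared \<Longrightarrow> fst p \<in> {1..k}"
  by (auto simp: shared_def shared_pos_def shared_index_def)

lemma fst_priv: "p \<in> priv c \<Longrightarrow> fst p \<in> {k<..n}"
  by (auto simp: priv_def)

lemma shared_priv_disjoint: "shared \<inter> priv c = {}"
  using fst_shared fst_priv by fastforce

lemma shared_subset: "shared \<subseteq> positions"
  using k_le pos_less by (auto simp: shared_def shared_pos_def shared_index_def positions_def)

lemma priv_subset: "priv c \<subseteq> positions"
  using pos_less by (auto simp: priv_def positions_def)

lemma priv_bij: "bij_betw (\<lambda>j. (j, pos c j)) {k<..n} (priv c)"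
  unfolding priv_def by (auto simp: bij_betw_def inj_on_def)

lemma card_priv: "card (priv c) = n - k"
  using bij_betw_same_card[OF priv_bij] by simp

lemma card_shared: "card shared = k * 2 ^ (s - 1)"
  using card_image[OF inj_shared_pos] by (simp add: shared_def shared_index_def card_SigmaI)

lemma seeds_bij: "bij_betw curry (supp_set positions) (seeds n T)"
proof -
  have "{b. \<forall>j u. (j \<notin> {1..n} \<or> u \<notin> {..<T j}) \<longrightarrow> \<not> b j u} = seeds n T"
    unfolding seeds_def by auto
  then show ?thesis using curry_bij[of "{1..n}" "\<lambda>j. {..<T j}"] by (simp add: positions_def)
qed

lemma sign_PC:
  "(if PC n T l q s f t (curry b) then -1 else 1::real) = (\<Prod>c<2 ^ s. term_sign c b)"
  using parity_prod[of "{..<2 ^ s}" "\<lambda>c. f (\<lambda>j. b (j, pos c j))"]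
  by (simp add: PC_def pos_def term_sign_def)

lemma term_sign_local:
  assumes c: "c < 2 ^ s" and b: "b \<in> supp_set positions"
  shows "term_sign c b = term_sign c (restrict_to (shared \<union> priv c) b)"
proof -
  have "b (j, pos c j) = restrict_to (shared \<union> priv c) b (j, pos c j)" for j
  proof (cases "b (j, pos c j)")
    case True
    then have "j \<in> {1..n}" using b by (auto simp: supp_set_def positions_def)
    then have "(j, pos c j) \<in> shared \<union> priv c"
      using shared_pos_delbit[OF _ c, of j] unfolding shared_def priv_def
      by (cases "j \<le> k") (force, auto)
    then show ?thesis by (simp add: restrict_to_def)
  qed (simp add: restrict_to_def)
  then show ?thesis by (simp add: term_sign_def)
qed

lemma term_sign_split:
  assumes a: "a \<in> supp_set shared" and w: "w \<in> supp_set (priv c)" and c: "c < 2 ^ s"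
  shows "term_sign c (\<lambda>p. a p \<or> w p) =
    (if f (\<lambda>j. chi l s k c (alpha_of a) j \<noteq> tail_of c w j) then -1 else 1)"
proof -
  have "(a (j, pos c j) \<or> w (j, pos c j)) = (chi l s k c (alpha_of a) j \<noteq> tail_of c w j)" for j
  proof -
    have a_out: "j \<notin> {1..k} \<Longrightarrow> \<not> a (j, u)" and w_out: "j \<notin> {k<..n} \<Longrightarrow> \<not> w (j, u)" for u
      using a w fst_shared fst_priv unfolding supp_set_def by fastforce+
    show ?thesis
    proof (cases "j \<in> {1..k}")
      case True
      then show ?thesis using w_out shared_pos_delbit[OF True c]
        by (auto simp: chi_def alpha_of_def tail_of_def)
    qed (use a_out w_out in \<open>auto simp: chi_def tail_of_def\<close>)
  qed
  then show ?thesis by (simp add: term_sign_def)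
qed

lemma term_bias:
  assumes a: "a \<in> supp_set shared" and c: "c < 2 ^ s"
  shows "(\<Sum>w\<in>supp_set (priv c). term_sign c (\<lambda>p. a p \<or> w p)) / 2 ^ card (priv c) =
    restr_bias n k f (chi l s k c (alpha_of a))"
proof -
  have V: "Vlast n k = supp_set {k<..n}"
    unfolding Vlast_def F2vec_def supp_set_def by auto
  have "tail_of c = (\<lambda>w j. j \<in> {k<..n} \<and> w (j, pos c j))"
    by (simp add: fun_eq_iff tail_of_def)
  then have bij: "bij_betw (tail_of c) (supp_set (priv c)) (Vlast n k)"
    using transfer_bij[OF priv_bij[of c]] by (simp add: V)
  show ?thesis
    unfolding restr_bias_def card_priv
    using sum.reindex_bij_betw[OF bij, of "\<lambda>y. if f (\<lambda>j. chi l s k c (alpha_of a) j \<noteq> y j) then -1 else 1::real"]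
    by (simp add: term_sign_split[OF a _ c])
qed

lemma alpha_of_bij: "bij_betw alpha_of (supp_set shared) (alphas k s)"
proof -
  have "{b. \<forall>j u. (j \<notin> {1..k} \<or> u \<notin> {..<(2::nat) ^ (s - 1)}) \<longrightarrow> \<not> b j u} = alphas k s"
    unfolding alphas_def by auto
  then have "bij_betw curry (supp_set shared_index) (alphas k s)"
    using curry_bij[of "{1..k}" "\<lambda>j. {..<(2::nat) ^ (s - 1)}"] by (simp add: shared_index_def)
  moreover have "bij_betw shared_pos shared_index shared"
    using inj_shared_pos by (simp add: bij_betw_def shared_def)
  ultimately have "bij_betw (curry \<circ> (\<lambda>a x. x \<in> shared_index \<and> a (shared_pos x)))
      (supp_set shared) (alphas k s)"
    by (intro bij_betw_trans[OF transfer_bij])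
  then show ?thesis by (simp add: alpha_of_def[abs_def] comp_def)
qed

end

theorem theorem2:
  fixes n k s :: nat and T q l :: "nat \<Rightarrow> nat"
    and f :: "(nat \<Rightarrow> bool) \<Rightarrow> bool" and t :: nat
  assumes T_pos: "\<forall>j \<in> {1..n}. T j > 0"
    and s_pos: "s \<ge> 1"
    and l_first: "l 1 = 0"
    and l_mono: "\<forall>i \<in> {1..s}. l i < l (Suc i)"
    and l_last: "l (Suc s) = k"
    and k_le: "k \<le> n"
    and q_pos: "\<forall>i \<in> {1..s}. q i > 0"
    and G1: "\<forall>j \<in> {k<..n}. inj_on (\<lambda>c. tau T l q s c mod T j) {..<2 ^ s}"
    and G2: "\<forall>i \<in> {1..s}. \<forall>j \<in> {l i <.. l (Suc i)}.
               inj_on (\<lambda>c. tau T l q s c mod T j) {c. c < 2 ^ s \<and> \<not> cbit c i}"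
  shows "bias_on (seeds n T) (PC n T l q s f t) =
           1 / 2 ^ (k * 2 ^ (s - 1)) *
           (\<Sum>\<alpha>\<in>alphas k s. \<Prod>c<2 ^ s. restr_bias n k f (chi l s k c \<alpha>))"
proof -
  interpret parity_check n k s T q l f t
    using T_pos l_first l_mono l_last k_le G1 G2 by unfold_locales
  have fin: "finite positions" by (simp add: positions_def)
  have "bias_on (seeds n T) (PC n T l q s f t) =
      (\<Sum>b\<in>supp_set positions. if PC n T l q s f t (curry b) then -1 else 1) / 2 ^ card positions"
    using sum.reindex_bij_betw[OF seeds_bij, of "\<lambda>b. if PC n T l q s f t b then -1 else 1::real"]
      bij_betw_same_card[OF seeds_bij, symmetric]
    by (simp add: bias_on_def card_supp_set[OF fin])
  also have "\<dots> = (\<Sum>b\<in>supp_set positions. \<Prod>c<2 ^ s. term_sign c b) / 2 ^ card positions"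
    by (simp add: sign_PC)
  also have "\<dots> = (\<Sum>a\<in>supp_set shared. \<Prod>c<2 ^ s.
      (\<Sum>w\<in>supp_set (priv c). term_sign c (\<lambda>p. a p \<or> w p)) / 2 ^ card (priv c)) / 2 ^ card shared"
    by (rule mean_prod_factor)
      (use fin shared_subset priv_subset shared_priv_disjoint priv_disjoint term_sign_local in auto)
  also have "\<dots> = (\<Sum>a\<in>supp_set shared. \<Prod>c<2 ^ s. restr_bias n k f (chi l s k c (alpha_of a)))
      / 2 ^ (k * 2 ^ (s - 1))"
    by (simp add: term_bias card_shared)
  also have "\<dots> = 1 / 2 ^ (k * 2 ^ (s - 1)) *
      (\<Sum>\<alpha>\<in>alphas k s. \<Prod>c<2 ^ s. restr_bias n k f (chi l s k c \<alpha>))"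
    using sum.reindex_bij_betw[OF alpha_of_bij] by simp
  finally show ?thesis .
qed

end
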